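(* Let $\rho=(a^b)$ be a partition of $n=ab$ with $a,b\ge 2$, and put $\alpha(\rho)=(a+1,a^{\,b-2},a-1)$ and $\beta(\rho)=(a^{\,b-1},a-1,1)$. Then: (1) $\deg_{G_n}(\rho)=2$; (2) the neighbors of $\rho$ in $G_n$ are exactly $\alpha(\rho)$ and $\beta(\rho)$; (3) $\rho,\alpha(\rho),\beta(\rho)$ form a triangle in $G_n$; (4) this triangle is the unique maximal clique of $G_n$ containing $\rho$; (5) consequently $\rho\in D_2(n)\cap L_2(n)$.
   Context: The partition graph $G_n$ has as vertices the integer partitions of $n$; two partitions are adjacent if one is obtained from the other by a single elementary unit transfer followed by reordering: decrease one part by $1$ and either increase a different part by $1$ or create a new part equal to $1$, then delete a part that became $0$ and sort in nonincreasing order (the result being different from the original). Exponent notation $a^k$ denotes $k$ parts equal to $a$; when $b=2$, $\alpha(\rho)=(a+1,a-1)$. $D_d(n)$ is the set of vertices of $G_n$ of degree $d$. The local simplex dimension of a vertex $v$ is $m-1$, where $m$ is the largest size of a clique of $G_n$ containing $v$ (i.e. the largest dimension of a simplex containing $v$ in the clique complex of $G_n$); $L_r(n)$ is the set of vertices of local simplex dimension $r$. *)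

theory Defs
  imports Main
begin

definition is_partition :: "nat \<Rightarrow> nat list \<Rightarrow> bool" where
  "is_partition n p \<longleftrightarrow> sum_list p = n \<and> (\<forall>x\<in>set p. 0 < x) \<and> sorted_wrt (\<ge>) p"

definition partitions :: "nat \<Rightarrow> nat list set" where
  "partitions n = {p. is_partition n p}"

definition normalize :: "nat list \<Rightarrow> nat list" where
  "normalize q = rev (sort (filter (\<lambda>x. x \<noteq> 0) q))"

definition transfer_step :: "nat list \<Rightarrow> nat list \<Rightarrow> bool" where
  "transfer_step p q \<longleftrightarrow> q \<noteq> p \<and>
     ((\<exists>i<length p. \<exists>j<length p. i \<noteq> j \<and>
          q = normalize ((p[i := p ! i - 1])[j := p ! j + 1])) \<or>
      (\<exists>i<length p. q = normalize (p[i := p ! i - 1] @ [1])))"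

definition G_edge :: "nat \<Rightarrow> nat list \<Rightarrow> nat list \<Rightarrow> bool" where
  "G_edge n p q \<longleftrightarrow> p \<in> partitions n \<and> q \<in> partitions n \<and>
     (transfer_step p q \<or> transfer_step q p)"

definition neighbors :: "nat \<Rightarrow> nat list \<Rightarrow> nat list set" where
  "neighbors n p = {q. G_edge n p q}"

definition degree :: "nat \<Rightarrow> nat list \<Rightarrow> nat" where
  "degree n p = card (neighbors n p)"

definition is_clique :: "nat \<Rightarrow> nat list set \<Rightarrow> bool" where
  "is_clique n C \<longleftrightarrow> C \<subseteq> partitions n \<and> (\<forall>p\<in>C. \<forall>q\<in>C. p \<noteq> q \<longrightarrow> G_edge n p q)"

definition is_maximal_clique :: "nat \<Rightarrow> nat list set \<Rightarrow> bool" where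
  "is_maximal_clique n C \<longleftrightarrow> is_clique n C \<and> (\<forall>C'. is_clique n C' \<and> C \<subseteq> C' \<longrightarrow> C' = C)"

definition local_simplex_dim :: "nat \<Rightarrow> nat list \<Rightarrow> nat" where
  "local_simplex_dim n v = Max {card C | C. is_clique n C \<and> v \<in> C} - 1"

definition D :: "nat \<Rightarrow> nat \<Rightarrow> nat list set" where
  "D d n = {v \<in> partitions n. degree n v = d}"

definition L :: "nat \<Rightarrow> nat \<Rightarrow> nat list set" where
  "L r n = {v \<in> partitions n. local_simplex_dim n v = r}"

end

(*
  A unit transfer removes two parts x, y from the multiset of parts and inserts x - 1 and y + 1,
  a resulting part 0 being dropped. From the rectangle (a^b) every move therefore yields
  alpha = (a+1, a^(b-2), a-1) or beta = (a^(b-1), a-1, 1). Conversely, if a move from q ends in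
  (a^b), the part that received a unit becomes a and the part that lost one becomes 0 or a, so q
  consists of a - 1, one of 1 or a + 1, and parts a; hence q is alpha or beta. A move creating a
  new part 1 cannot end in (a^b).
  Moving a unit from the part a + 1 of alpha into a new part gives beta, so the closed
  neighbourhood {rho, alpha, beta} of rho is a clique. Every clique through rho lies in the closed
  neighbourhood of rho, so this triangle is the unique maximal clique containing rho.
*)
theory Submission
  imports Defs "HOL-Library.Multiset"
begin

lemma sorted_desc_mset_eq:
  fixes xs ys :: "'a::linorder list"
  assumes "sorted_wrt (\<ge>) xs" "sorted_wrt (\<ge>) ys" "mset xs = mset ys"
  shows "xs = ys"
proof -
  have "sort (rev xs) = rev ys"
    by (rule properties_for_sort) (use assms in \<open>simp_all add: sorted_wrt_rev\<close>)
  moreover have "sort (rev xs) = rev xs"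
    using assms(1) by (simp add: sorted_wrt_rev sorted_sort_id)
  ultimately show ?thesis by simp
qed

lemma mset_normalize: "mset (normalize r) = filter_mset (\<lambda>x. x \<noteq> 0) (mset r)"
  unfolding normalize_def by (simp add: filter_mset_eq_conv)

lemma set_normalize: "set (normalize r) = set r - {0}"
  unfolding normalize_def by auto

lemma sorted_normalize: "sorted_wrt (\<ge>) (normalize r)"
  unfolding normalize_def by (simp add: sorted_wrt_rev)

lemma mset_update_add:
  "i < length xs \<Longrightarrow> mset (xs[i := u]) + {#xs ! i#} = mset xs + {#u#}"
  by (simp add: mset_update)

lemma mset_update_update:
  assumes "i < length xs" "j < length xs" "i \<noteq> j"
  shows "mset (xs[i := u, j := v]) + {#xs ! i, xs ! j#} = mset xs + {#u, v#}"
proof -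
  have "mset (xs[i := u, j := v]) + {#xs ! j#} = mset (xs[i := u]) + {#v#}"
    using mset_update_add[of j "xs[i := u]" v] assms by simp
  then show ?thesis
    using mset_update_add[of i xs u] assms(1) by (simp add: add_mset_commute)
qed

lemma mset_normalize_transfer:
  assumes "i < length q" "j < length q" "i \<noteq> j" "\<forall>x\<in>set q. 0 < x"
  shows "mset (normalize (q[i := q ! i - 1, j := q ! j + 1])) + {#q ! i, q ! j#}
           = mset q + filter_mset (\<lambda>x. x \<noteq> 0) {#q ! i - 1, q ! j + 1#}"
proof -
  have "filter_mset (\<lambda>x. x \<noteq> 0) (mset (q[i := q ! i - 1, j := q ! j + 1]) + {#q ! i, q ! j#})
      = filter_mset (\<lambda>x. x \<noteq> 0) (mset q + {#q ! i - 1, q ! j + 1#})"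
    by (simp only: mset_update_update[OF assms(1-3)])
  then show ?thesis
    using assms by (simp add: mset_normalize filter_mset_eq_conv)
qed

lemma mset_normalize_transfer_new_part:
  assumes "i < length q" "\<forall>x\<in>set q. 0 < x"
  shows "mset (normalize (q[i := q ! i - 1] @ [1])) + {#q ! i#}
           = mset q + filter_mset (\<lambda>x. x \<noteq> 0) {#q ! i - 1, 1#}"
proof -
  have "filter_mset (\<lambda>x. x \<noteq> 0) (mset (q[i := q ! i - 1] @ [1]) + {#q ! i#})
      = filter_mset (\<lambda>x. x \<noteq> 0) (mset q + {#q ! i - 1, 1#})"
    using mset_update_add[OF assms(1)] by (simp add: add_mset_commute)
  then show ?thesis
    using assms by (simp add: mset_normalize filter_mset_eq_conv)
qed

lemma G_edge_commute: "G_edge n p q \<longleftrightarrow> G_edge n q p"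
  by (auto simp: G_edge_def)

lemma not_G_edge_self: "\<not> G_edge n p p"
  by (simp add: G_edge_def transfer_step_def)

lemma is_clique_triangle:
  assumes "G_edge n p q" "G_edge n p r" "G_edge n q r"
  shows "is_clique n {p, q, r}"
proof -
  have "G_edge n q p" "G_edge n r p" "G_edge n r q"
    using assms G_edge_commute by blast+
  moreover have "{p, q, r} \<subseteq> partitions n"
    using assms(1,2) by (simp add: G_edge_def)
  ultimately show ?thesis
    using assms unfolding is_clique_def by auto
qed

lemma clique_subset_closed_neighborhood:
  "is_clique n C \<Longrightarrow> v \<in> C \<Longrightarrow> C \<subseteq> insert v (neighbors n v)"
  by (auto simp: is_clique_def neighbors_def)

lemma maximal_clique_closed_neighborhood:
  assumes "is_clique n (insert v (neighbors n v))"
  shows "is_maximal_clique n (insert v (neighbors n v))"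
  unfolding is_maximal_clique_def
proof (intro conjI allI impI)
  fix C assume "is_clique n C \<and> insert v (neighbors n v) \<subseteq> C"
  then show "C = insert v (neighbors n v)"
    using clique_subset_closed_neighborhood[of n C v] by blast
qed (rule assms)

lemma maximal_clique_eq_closed_neighborhood:
  assumes "is_clique n (insert v (neighbors n v))" "is_maximal_clique n C" "v \<in> C"
  shows "C = insert v (neighbors n v)"
proof -
  have "C \<subseteq> insert v (neighbors n v)"
    using assms(2,3) clique_subset_closed_neighborhood by (simp add: is_maximal_clique_def)
  then show ?thesis
    using assms(1,2) unfolding is_maximal_clique_def by blast
qed

lemma local_simplex_dim_closed_neighborhood:
  assumes "is_clique n (insert v (neighbors n v))" "finite (neighbors n v)"
  shows "local_simplex_dim n v = card (neighbors n v)"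
proof -
  let ?K = "insert v (neighbors n v)"
  let ?sizes = "{card C | C. is_clique n C \<and> v \<in> C}"
  have "v \<notin> neighbors n v"
    by (simp add: neighbors_def not_G_edge_self)
  then have card_K: "card ?K = card (neighbors n v) + 1"
    using assms(2) by simp
  have le: "card C \<le> card ?K" if "is_clique n C" "v \<in> C" for C
    using that assms(2) by (intro card_mono clique_subset_closed_neighborhood) simp_all
  have "?sizes \<subseteq> {..card ?K}"
    using le by blast
  then have "finite ?sizes"
    by (rule finite_subset) simp
  moreover have "card ?K \<in> ?sizes"
    using assms(1) by blast
  ultimately have "Max ?sizes = card ?K"
    using le by (intro Max_eqI) blast+
  then show ?thesis
    unfolding local_simplex_dim_def card_K by simp
qed

lemma sorted_wrt_ge_replicate [simp]: "sorted_wrt (\<ge>) (replicate n (x::'a::order))"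
  by (induction n) auto

lemma sorted_alpha: "sorted_wrt (\<ge>) ([a + 1] @ replicate m a @ [a - 1::nat])"
  by (auto simp: sorted_wrt_append)

lemma sorted_beta: "2 \<le> a \<Longrightarrow> sorted_wrt (\<ge>) (replicate m a @ [a - 1, 1::nat])"
  by (auto simp: sorted_wrt_append)

lemma mset_alpha:
  "2 \<le> b \<Longrightarrow> mset ([a + 1] @ replicate (b - 2) a @ [a - 1]) + {#a, a#}
     = replicate_mset b a + {#a - 1, a + 1#}"
  by (auto simp: le_iff_add)

lemma mset_beta:
  "1 \<le> b \<Longrightarrow> mset (replicate (b - 1) a @ [a - 1, 1]) + {#a#}
     = replicate_mset b a + {#a - 1, 1#}"
  by (auto simp: le_iff_add)

lemma replicate_in_partitions: "0 < a \<Longrightarrow> replicate b a \<in> partitions (a * b)"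
  by (simp add: partitions_def is_partition_def sum_list_replicate)

lemma alpha_in_partitions:
  assumes "2 \<le> a" "2 \<le> b"
  shows "[a + 1] @ replicate (b - 2) a @ [a - 1] \<in> partitions (a * b)"
proof -
  obtain m where "b = m + 2" using assms(2) by (metis le_add_diff_inverse2)
  then show ?thesis
    using assms(1) sorted_alpha by (simp add: partitions_def is_partition_def sum_list_replicate algebra_simps)
qed

lemma beta_in_partitions:
  assumes "2 \<le> a" "1 \<le> b"
  shows "replicate (b - 1) a @ [a - 1, 1] \<in> partitions (a * b)"
proof -
  obtain m where "b = m + 1" using assms(2) by (metis le_add_diff_inverse2)
  then show ?thesis
    using assms(1) sorted_beta by (simp add: partitions_def is_partition_def sum_list_replicate algebra_simps)
qed

lemma normalize_replicate_transfer:
  assumes "2 \<le> a" "i < b" "j < b" "i \<noteq> j"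
  shows "normalize ((replicate b a)[i := a - 1, j := a + 1]) = [a + 1] @ replicate (b - 2) a @ [a - 1]"
proof (rule sorted_desc_mset_eq)
  have "mset (normalize ((replicate b a)[i := a - 1, j := a + 1])) + {#a, a#}
      = replicate_mset b a + {#a - 1, a + 1#}"
    using mset_normalize_transfer[of i "replicate b a" j] assms by simp
  moreover have "2 \<le> b" using assms(2-4) by linarith
  ultimately show "mset (normalize ((replicate b a)[i := a - 1, j := a + 1]))
      = mset ([a + 1] @ replicate (b - 2) a @ [a - 1])"
    using mset_alpha[of b a] by (metis add_right_cancel)
  show "sorted_wrt (\<ge>) ([a + 1] @ replicate (b - 2) a @ [a - 1])"
    by (rule sorted_alpha)
qed (rule sorted_normalize)

lemma normalize_replicate_new_part:
  assumes "2 \<le> a" "i < b"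
  shows "normalize ((replicate b a)[i := a - 1] @ [1]) = replicate (b - 1) a @ [a - 1, 1]"
proof (rule sorted_desc_mset_eq)
  have "mset (normalize ((replicate b a)[i := a - 1] @ [1])) + {#a#}
      = replicate_mset b a + {#a - 1, 1#}"
    using mset_normalize_transfer_new_part[of i "replicate b a"] assms by simp
  moreover have "mset (replicate (b - 1) a @ [a - 1, 1]) + {#a#} = replicate_mset b a + {#a - 1, 1#}"
    using assms(2) by (intro mset_beta) simp
  ultimately show "mset (normalize ((replicate b a)[i := a - 1] @ [1]))
      = mset (replicate (b - 1) a @ [a - 1, 1])"
    by (metis add_right_cancel)
  show "sorted_wrt (\<ge>) (replicate (b - 1) a @ [a - 1, 1])"
    using assms(1) by (rule sorted_beta)
qed (rule sorted_normalize)

lemma normalize_alpha_new_part: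
  assumes "2 \<le> a" "2 \<le> b"
  shows "normalize (([a + 1] @ replicate (b - 2) a @ [a - 1])[0 := a] @ [1])
           = replicate (b - 1) a @ [a - 1, 1]"
proof (rule sorted_desc_mset_eq)
  obtain m where "b = m + 2" using assms(2) by (metis le_add_diff_inverse2)
  then show "mset (normalize (([a + 1] @ replicate (b - 2) a @ [a - 1])[0 := a] @ [1]))
      = mset (replicate (b - 1) a @ [a - 1, 1])"
    using assms(1) by (simp add: mset_normalize filter_mset_eq_conv)
  show "sorted_wrt (\<ge>) (replicate (b - 1) a @ [a - 1, 1])"
    using assms(1) by (rule sorted_beta)
qed (rule sorted_normalize)

lemma transfer_step_from_replicate:
  assumes "2 \<le> a" "transfer_step (replicate b a) q"
  shows "q = [a + 1] @ replicate (b - 2) a @ [a - 1] \<or> q = replicate (b - 1) a @ [a - 1, 1]"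
  using assms(2) unfolding transfer_step_def
  using normalize_replicate_transfer[OF assms(1)] normalize_replicate_new_part[OF assms(1)]
  by fastforce

lemma mset_transfer_to_replicate:
  assumes "2 \<le> a" "\<forall>x\<in>set q. 0 < x" "i < length q" "j < length q" "i \<noteq> j"
    and rho: "replicate b a = normalize (q[i := q ! i - 1, j := q ! j + 1])"
  shows "mset q + {#a, a#} = replicate_mset b a + {#a - 1, a + 1#} \<or>
         mset q + {#a#} = replicate_mset b a + {#a - 1, 1#}"
proof -
  define x y where "x = q ! i" and "y = q ! j"
  let ?r = "q[i := x - 1, j := y + 1]"
  have "0 < x"
    using assms(2,3) unfolding x_def by simp
  have nonzero_part: "z = a" if "z \<in> set ?r" "z \<noteq> 0" for z
    using that rho set_normalize[of ?r] unfolding x_def y_def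
    by (metis Diff_iff empty_iff in_set_replicate singletonD)
  have "y + 1 \<in> set ?r"
    using assms(4) by (intro set_update_memI) simp
  then have y: "y = a - 1"
    using nonzero_part by force
  have "x - 1 \<in> set ?r"
    using nth_mem[of i ?r] assms(3,5) by simp
  then have x: "x = a + 1 \<or> x = 1"
    using nonzero_part \<open>0 < x\<close> by force
  have "mset (normalize ?r) + {#x, y#} = mset q + filter_mset (\<lambda>z. z \<noteq> 0) {#x - 1, y + 1#}"
    unfolding x_def y_def by (rule mset_normalize_transfer[OF assms(3-5,2)])
  then have "replicate_mset b a + {#x, y#} = mset q + filter_mset (\<lambda>z. z \<noteq> 0) {#x - 1, y + 1#}"
    using rho unfolding x_def y_def by (metis mset_replicate)
  with x y assms(1) show ?thesis
    by (auto simp: add_mset_commute)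
qed

lemma transfer_step_to_replicate:
  assumes "2 \<le> a" "2 \<le> b" "q \<in> partitions n" "transfer_step q (replicate b a)"
  shows "q = [a + 1] @ replicate (b - 2) a @ [a - 1] \<or> q = replicate (b - 1) a @ [a - 1, 1]"
proof -
  have pos: "\<forall>x\<in>set q. 0 < x" and sorted: "sorted_wrt (\<ge>) q"
    using assms(3) by (simp_all add: partitions_def is_partition_def)
  from assms(4) consider
      (move) i j where "i < length q" "j < length q" "i \<noteq> j"
        "replicate b a = normalize (q[i := q ! i - 1, j := q ! j + 1])"
    | (new_part) i where "i < length q" "replicate b a = normalize (q[i := q ! i - 1] @ [1])"
    unfolding transfer_step_def by blast
  then show ?thesis
  proof cases
    case move
    have "mset (replicate (b - 1) a @ [a - 1, 1]) + {#a#} = replicate_mset b a + {#a - 1, 1#}"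
      using assms(2) by (intro mset_beta) simp
    then have "mset q = mset ([a + 1] @ replicate (b - 2) a @ [a - 1]) \<or>
               mset q = mset (replicate (b - 1) a @ [a - 1, 1])"
      using mset_transfer_to_replicate[OF assms(1) pos move] mset_alpha[OF assms(2)]
      by (metis add_right_cancel)
    then show ?thesis
      using sorted_desc_mset_eq[OF sorted sorted_alpha] sorted_desc_mset_eq[OF sorted sorted_beta]
        assms(1) by blast
  next
    case new_part
    then have "1 \<in> set (replicate b a)"
      by (simp add: set_normalize)
    then show ?thesis
      using assms(1) by simp
  qed
qed

lemma transfer_step_replicate_alpha:
  assumes "2 \<le> a" "2 \<le> b"
  shows "transfer_step (replicate b a) ([a + 1] @ replicate (b - 2) a @ [a - 1])"
    (is "transfer_step ?\<rho> ?\<alpha>")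
proof -
  have "?\<alpha> = normalize (?\<rho>[1 := ?\<rho> ! 1 - 1, 0 := ?\<rho> ! 0 + 1])"
    using normalize_replicate_transfer[OF assms(1), of 1 b 0] assms(2) by simp
  moreover have "?\<alpha> \<noteq> ?\<rho>" "0 < length ?\<rho>" "1 < length ?\<rho>"
    using assms by (cases b; simp)+
  ultimately show ?thesis
    unfolding transfer_step_def by blast
qed

lemma transfer_step_replicate_beta:
  assumes "2 \<le> a" "1 \<le> b"
  shows "transfer_step (replicate b a) (replicate (b - 1) a @ [a - 1, 1])"
    (is "transfer_step ?\<rho> ?\<beta>")
proof -
  have "?\<beta> = normalize (?\<rho>[0 := ?\<rho> ! 0 - 1] @ [1])"
    using normalize_replicate_new_part[OF assms(1), of 0 b] assms(2) by simp
  moreover have "?\<beta> \<noteq> ?\<rho>" "0 < length ?\<rho>"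
    using assms(2) by (auto dest: arg_cong[of _ _ length])
  ultimately show ?thesis
    unfolding transfer_step_def by blast
qed

lemma neighbors_replicate:
  assumes "2 \<le> a" "2 \<le> b"
  shows "neighbors (a * b) (replicate b a)
           = {[a + 1] @ replicate (b - 2) a @ [a - 1], replicate (b - 1) a @ [a - 1, 1]}"
proof -
  have "replicate b a \<in> partitions (a * b)"
    "[a + 1] @ replicate (b - 2) a @ [a - 1] \<in> partitions (a * b)"
    "replicate (b - 1) a @ [a - 1, 1] \<in> partitions (a * b)"
    using assms replicate_in_partitions alpha_in_partitions beta_in_partitions by simp_all
  moreover have "transfer_step (replicate b a) ([a + 1] @ replicate (b - 2) a @ [a - 1])"
    "transfer_step (replicate b a) (replicate (b - 1) a @ [a - 1, 1])"
    using assms transfer_step_replicate_alpha transfer_step_replicate_beta by simp_all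
  ultimately show ?thesis
    using transfer_step_from_replicate[OF assms(1)] transfer_step_to_replicate[OF assms]
    by (auto simp: neighbors_def G_edge_def)
qed

lemma G_edge_alpha_beta:
  assumes "2 \<le> a" "2 \<le> b"
  shows "G_edge (a * b) ([a + 1] @ replicate (b - 2) a @ [a - 1]) (replicate (b - 1) a @ [a - 1, 1])"
    (is "G_edge _ ?\<alpha> ?\<beta>")
proof -
  have "?\<beta> = normalize (?\<alpha>[0 := ?\<alpha> ! 0 - 1] @ [1])"
    using normalize_alpha_new_part[OF assms] by simp
  moreover have "?\<beta> \<noteq> ?\<alpha>"
    using assms(2) by (auto dest: arg_cong[of _ _ length])
  ultimately have "transfer_step ?\<alpha> ?\<beta>"
    unfolding transfer_step_def by force
  then show ?thesis
    using assms alpha_in_partitions beta_in_partitions by (simp add: G_edge_def)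
qed

theorem proposition3p3:
  fixes a b n :: nat and \<rho> \<alpha> \<beta> :: "nat list"
  assumes "a \<ge> 2" and "b \<ge> 2" and "n = a * b"
    and "\<rho> = replicate b a"
    and "\<alpha> = [a + 1] @ replicate (b - 2) a @ [a - 1]"
    and "\<beta> = replicate (b - 1) a @ [a - 1, 1]"
  shows "degree n \<rho> = 2 \<and>
         neighbors n \<rho> = {\<alpha>, \<beta>} \<and>
         is_clique n {\<rho>, \<alpha>, \<beta>} \<and> card {\<rho>, \<alpha>, \<beta>} = 3 \<and>
         is_maximal_clique n {\<rho>, \<alpha>, \<beta>} \<and>
         (\<forall>C. is_maximal_clique n C \<and> \<rho> \<in> C \<longrightarrow> C = {\<rho>, \<alpha>, \<beta>}) \<and>
         \<rho> \<in> D 2 n \<inter> L 2 n"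
proof -
  have nbrs: "neighbors n \<rho> = {\<alpha>, \<beta>}"
    using neighbors_replicate assms by simp
  have "G_edge n \<rho> \<alpha>" "G_edge n \<rho> \<beta>"
    using nbrs by (auto simp: neighbors_def)
  moreover have "G_edge n \<alpha> \<beta>"
    using G_edge_alpha_beta assms by simp
  ultimately have clique: "is_clique n {\<rho>, \<alpha>, \<beta>}"
    by (rule is_clique_triangle)
  then have closed_clique: "is_clique n (insert \<rho> (neighbors n \<rho>))"
    by (simp add: nbrs)
  have "\<alpha> \<noteq> \<beta>"
    using assms(2,5,6) by (auto dest: arg_cong[of _ _ length])
  then have deg: "degree n \<rho> = 2"
    by (simp add: degree_def nbrs)
  have "\<rho> \<notin> {\<alpha>, \<beta>}"
    using nbrs not_G_edge_self by (metis mem_Collect_eq neighbors_def)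
  then have "card {\<rho>, \<alpha>, \<beta>} = 3"
    using \<open>\<alpha> \<noteq> \<beta>\<close> by simp
  moreover have "is_maximal_clique n {\<rho>, \<alpha>, \<beta>}"
    using maximal_clique_closed_neighborhood[OF closed_clique] by (simp add: nbrs)
  moreover have "\<forall>C. is_maximal_clique n C \<and> \<rho> \<in> C \<longrightarrow> C = {\<rho>, \<alpha>, \<beta>}"
    using maximal_clique_eq_closed_neighborhood[OF closed_clique] by (simp add: nbrs)
  moreover have "local_simplex_dim n \<rho> = 2"
    using local_simplex_dim_closed_neighborhood[OF closed_clique] deg by (simp add: degree_def nbrs)
  moreover have "\<rho> \<in> partitions n"
    using \<open>G_edge n \<rho> \<alpha>\<close> by (simp add: G_edge_def)
  ultimately show ?thesis
    using nbrs clique deg by (simp add: D_def L_def)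
qed

end
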